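(* Let $X$ be a compact metrizable space, let $f\in\mathrm{C}(X)$ be self-adjoint, and let $\varepsilon>0$. Then there exist $n\in\mathbb N$ and self-adjoint $f_1,\dots,f_n\in\mathrm{C}(X)$ such that $\|f-f_i\|_\infty<\varepsilon$ for $i=1,\dots,n$, and $\frac1n\,|\{1\le i\le n: f_i(x)=0\}|<\varepsilon$ for all $x\in X$. *)

theory Defs
  imports "HOL-Analysis.Analysis"
begin

end

theory Submission
  imports Defs
begin

(* Take f_i = f + i \<epsilon> / (n + 1) for i = 1, ..., n with 1/n < \<epsilon>. These are distinct real
   translates of f within distance \<epsilon>, so at every point at most one of them vanishes. *)

lemma card_zeros_of_injective_translates_le_1:
  fixes a :: "'b::group_add"
  assumes "inj_on c I"
  shows "card {i\<in>I. a + c i = 0} \<le> 1"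
proof -
  have "c ` {i\<in>I. a + c i = 0} \<subseteq> {- a}"
    by (auto simp: add_eq_0_iff2)
  then have "card {i\<in>I. a + c i = 0} \<le> card {- a}"
    by (intro card_inj_on_le[where f = c]) (auto intro: inj_on_subset[OF assms])
  then show ?thesis by simp
qed

theorem lemma3p6:
  fixes T :: "'a topology" and f :: "'a \<Rightarrow> complex" and \<epsilon> :: real
  assumes "compact_space T" and "metrizable_space T"
    and "continuous_map T euclidean f"
    and "\<forall>x\<in>topspace T. f x \<in> \<real>"
    and "\<epsilon> > 0"
  shows "\<exists>(n::nat) (fs :: nat \<Rightarrow> 'a \<Rightarrow> complex). n \<ge> 1 \<and>
     (\<forall>i\<in>{1..n}. continuous_map T euclidean (fs i) \<and> (\<forall>x\<in>topspace T. fs i x \<in> \<real>)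
        \<and> (\<forall>x\<in>topspace T. norm (f x - fs i x) < \<epsilon>)) \<and>
     (\<forall>x\<in>topspace T. real (card {i\<in>{1..n}. fs i x = 0}) / real n < \<epsilon>)"
proof -
  obtain n :: nat where "n > 0" and n_small: "inverse (real n) < \<epsilon>"
    using ex_inverse_of_nat_less \<open>\<epsilon> > 0\<close> by blast
  define c :: "nat \<Rightarrow> real" where "c i = \<epsilon> * real i / real (n + 1)" for i
  define fs where "fs i x = f x + of_real (c i)" for i x
  have "inj c"
    using \<open>\<epsilon> > 0\<close> by (intro injI) (simp add: c_def)
  then have shifts_inj: "inj_on (\<lambda>i. complex_of_real (c i)) {1..n}"
    by (auto simp: inj_on_def dest: injD)
  have "\<bar>c i\<bar> < \<epsilon>" if "i \<le> n" for i
  proof -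
    have "\<epsilon> * real i < \<epsilon> * real (n + 1)"
      using that \<open>\<epsilon> > 0\<close> by simp
    then show ?thesis
      using \<open>\<epsilon> > 0\<close> by (simp add: c_def pos_divide_less_eq del: of_nat_add)
  qed
  then have close: "\<forall>i\<in>{1..n}. continuous_map T euclidean (fs i) \<and> (\<forall>x\<in>topspace T. fs i x \<in> \<real>)
      \<and> (\<forall>x\<in>topspace T. norm (f x - fs i x) < \<epsilon>)"
    using assms(3,4) by (auto simp: fs_def[abs_def] intro!: continuous_intros)
  have "real (card {i\<in>{1..n}. fs i x = 0}) / real n < \<epsilon>" for x
  proof -
    have "card {i\<in>{1..n}. fs i x = 0} \<le> 1"
      unfolding fs_def using shifts_inj by (rule card_zeros_of_injective_translates_le_1)
    then have "real (card {i\<in>{1..n}. fs i x = 0}) / real n \<le> 1 / real n"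
      by (simp add: divide_right_mono)
    with n_small show ?thesis by (simp add: inverse_eq_divide)
  qed
  with \<open>n > 0\<close> close show ?thesis by (intro exI[of _ n] exI[of _ fs]) auto
qed

end
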